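(* Let $\mathcal{U}$ be a finite-dimensional real Hilbert space, let $\mathcal{W}$ be a real Hilbert space, let $\phi:\mathcal{U}\to\mathcal{B}(\mathcal{U},\mathcal{W})$ be a map, and let $(u_i,y_i)\in\mathcal{U}\times\mathcal{U}$, $i=1,\dots,n$, be given data. For $Q\in\mathcal{B}(\mathcal{W})$ define $$L(Q)=\sum_{i=1}^n \big\|\phi(u_i)^*Q\,\phi(u_i)u_i-y_i\big\|_{\mathcal{U}}^2 .$$ Let $\hat{\mathcal{W}}=\sum_{i=1}^n \operatorname{im}\phi(u_i)\subset\mathcal{W}$ and let $\Pi\in\mathcal{B}(\mathcal{W})$ be the orthogonal projection onto $\hat{\mathcal{W}}$. Then: (1) $L(\Pi Q\Pi)=L(Q)$ for all $Q\in\mathcal{B}(\mathcal{W})$; (2) $\|\Pi Q\Pi\|\le\|Q\|$ for all $Q\in\mathcal{B}(\mathcal{W})$, where $\|\cdot\|$ is the operator norm; (3) $\Pi Q\Pi\in\mathcal{B}^+(\mathcal{W})$ for all $Q\in\mathcal{B}^+(\mathcal{W})$.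
   Context: $\mathcal{B}(\mathcal{U},\mathcal{W})$ denotes the bounded linear operators from $\mathcal{U}$ to $\mathcal{W}$, $\mathcal{B}(\mathcal{W})=\mathcal{B}(\mathcal{W},\mathcal{W})$, and $B^*$ is the adjoint of $B$. An operator $G$ on a Hilbert space $\mathcal{H}$ is called nonnegative if $\langle Gu,u\rangle_{\mathcal{H}}\ge 0$ for all $u\in\mathcal{H}$ (self-adjointness is not required), and $\mathcal{B}^+(\mathcal{H})$ denotes the set of nonnegative operators in $\mathcal{B}(\mathcal{H})$. *)

theory Defs
  imports "HOL-Analysis.Analysis"
begin

definition lossL ::
  "('u::euclidean_space \<Rightarrow> ('u \<Rightarrow>\<^sub>L 'w::{real_inner,complete_space})) \<Rightarrow> nat \<Rightarrow>
   (nat \<Rightarrow> 'u) \<Rightarrow> (nat \<Rightarrow> 'u) \<Rightarrow> ('w \<Rightarrow>\<^sub>L 'w) \<Rightarrow> real" where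
  "lossL \<phi> n u y Q =
     (\<Sum>i=1..n. (norm (adjoint (blinfun_apply (\<phi> (u i))) (Q (\<phi> (u i) (u i))) - y i))\<^sup>2)"

definition is_orth_proj :: "('w::real_inner \<Rightarrow>\<^sub>L 'w) \<Rightarrow> 'w set \<Rightarrow> bool" where
  "is_orth_proj P S \<longleftrightarrow> (\<forall>w. P w \<in> S \<and> (\<forall>v\<in>S. inner (w - P w) v = 0))"

text \<open>Nonnegative operator (self-adjointness not required).\<close>
definition nonneg_op :: "('w::real_inner \<Rightarrow>\<^sub>L 'w) \<Rightarrow> bool" where
  "nonneg_op G \<longleftrightarrow> (\<forall>x. 0 \<le> inner (G x) x)"

end

theory Submission
  imports Defs
begin

text \<open>Every \<open>\<phi>(u\<^sub>i)\<close> maps into \<open>\<Pi>\<close>'s range, so \<open>\<phi>(u\<^sub>i)\<^sup>* \<Pi> = \<phi>(u\<^sub>i)\<^sup>*\<close> and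
  \<open>\<Pi> \<phi>(u\<^sub>i) = \<phi>(u\<^sub>i)\<close>; hence compressing \<open>Q\<close> to \<open>\<Pi> Q \<Pi>\<close> does not change any term of the loss.
  Being an orthogonal projection, \<open>\<Pi>\<close> is self-adjoint with \<open>\<parallel>\<Pi>\<parallel> \<le> 1\<close>, which gives the
  norm bound and preserves nonnegativity, as \<open>\<langle>\<Pi> Q \<Pi> x, x\<rangle> = \<langle>Q \<Pi> x, \<Pi> x\<rangle>\<close>.\<close>

text \<open>The library's \<open>adjoint_works\<close> needs a Euclidean codomain; for \<open>\<W>\<close> we only have an inner
  product space, but a Euclidean domain suffices for this explicit formula.\<close>

lemma adjoint_eq_sum_Basis:
  fixes f :: "'n::euclidean_space \<Rightarrow> 'm::real_inner"
  assumes "linear f"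
  shows "adjoint f y = (\<Sum>i\<in>Basis. (f i \<bullet> y) *\<^sub>R i)"
proof -
  interpret linear f by fact
  have "f x \<bullet> y = x \<bullet> (\<Sum>i\<in>Basis. (f i \<bullet> y) *\<^sub>R i)" for x y
  proof -
    have "f x \<bullet> y = f (\<Sum>i\<in>Basis. (x \<bullet> i) *\<^sub>R i) \<bullet> y"
      by (simp add: euclidean_representation)
    also have "\<dots> = (\<Sum>i\<in>Basis. (x \<bullet> i) *\<^sub>R f i) \<bullet> y"
      by (simp add: sum scale)
    finally show ?thesis
      by (simp add: inner_sum_left inner_sum_right mult.commute)
  qed
  then have "adjoint f = (\<lambda>y. \<Sum>i\<in>Basis. (f i \<bullet> y) *\<^sub>R i)"
    by (intro adjoint_unique) blast
  then show ?thesis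
    by simp
qed

lemma orth_proj_mem:
  "is_orth_proj P S \<Longrightarrow> P w \<in> S"
  unfolding is_orth_proj_def by blast

lemma orth_proj_orthogonal:
  "is_orth_proj P S \<Longrightarrow> v \<in> S \<Longrightarrow> (w - P w) \<bullet> v = 0"
  unfolding is_orth_proj_def by blast

lemma orth_proj_self_adjoint:
  assumes "is_orth_proj P S"
  shows "P w \<bullet> x = w \<bullet> P x"
proof -
  have "P w \<bullet> x = P w \<bullet> P x + (x - P x) \<bullet> P w"
    by (simp add: inner_diff_left inner_diff_right inner_commute)
  also have "\<dots> = P w \<bullet> P x"
    using assms by (simp add: orth_proj_orthogonal orth_proj_mem)
  also have "\<dots> = w \<bullet> P x - (w - P w) \<bullet> P x"
    by (simp add: inner_diff_left)
  also have "\<dots> = w \<bullet> P x"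
    using assms by (simp add: orth_proj_orthogonal orth_proj_mem)
  finally show ?thesis .
qed

lemma orth_proj_fixes:
  assumes "subspace S" and "is_orth_proj P S" and "v \<in> S"
  shows "P v = v"
proof -
  have "v - P v \<in> S"
    using assms by (simp add: orth_proj_mem subspace_diff)
  then have "(v - P v) \<bullet> (v - P v) = 0"
    by (rule orth_proj_orthogonal[OF assms(2)])
  then show ?thesis by simp
qed

lemma inner_orth_proj_right:
  assumes "subspace S" and "is_orth_proj P S" and "v \<in> S"
  shows "v \<bullet> P w = v \<bullet> w"
  using orth_proj_self_adjoint[OF assms(2), of v w] orth_proj_fixes[OF assms] by simp

lemma norm_orth_proj_le_one:
  assumes "is_orth_proj P S"
  shows "norm P \<le> 1"
proof (rule norm_blinfun_bound)
  fix x
  have "(norm (P x))\<^sup>2 = P x \<bullet> P x"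
    by (simp add: power2_norm_eq_inner)
  also have "\<dots> = x \<bullet> P x"
    using orth_proj_orthogonal[OF assms orth_proj_mem[OF assms], of x]
    by (simp add: inner_diff_left)
  also have "\<dots> \<le> norm x * norm (P x)"
    by (rule norm_cauchy_schwarz)
  finally show "norm (P x) \<le> 1 * norm x"
    by (cases "norm (P x) = 0") (auto simp: power2_eq_square mult_le_cancel_right)
qed simp

lemma adjoint_orth_proj:
  fixes f :: "'n::euclidean_space \<Rightarrow> 'm::real_inner"
  assumes "linear f" and "range f \<subseteq> S" and "subspace S" and "is_orth_proj P S"
  shows "adjoint f (P z) = adjoint f z"
  using assms by (simp add: adjoint_eq_sum_Basis inner_orth_proj_right image_subset_iff)

lemma norm_compress_le:
  fixes P Q :: "'a::real_normed_vector \<Rightarrow>\<^sub>L 'a"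
  assumes "norm P \<le> 1"
  shows "norm (P o\<^sub>L Q o\<^sub>L P) \<le> norm Q"
proof -
  have "norm (P o\<^sub>L Q o\<^sub>L P) \<le> norm P * norm Q * norm P"
    by (meson norm_blinfun_compose norm_ge_zero mult_right_mono order_trans)
  also have "\<dots> \<le> 1 * norm Q * 1"
    using assms by (intro mult_mono) auto
  finally show ?thesis by simp
qed

lemma nonneg_op_compress:
  fixes P Q :: "'a::real_inner \<Rightarrow>\<^sub>L 'a"
  assumes "\<And>w x. P w \<bullet> x = w \<bullet> P x" and "nonneg_op Q"
  shows "nonneg_op (P o\<^sub>L Q o\<^sub>L P)"
  using assms by (simp add: nonneg_op_def)

lemma lossL_compress:
  assumes "subspace S" and "is_orth_proj P S"
    and ranges: "(\<Union>i\<in>{1..n}. range (blinfun_apply (\<phi> (u i)))) \<subseteq> S"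
  shows "lossL \<phi> n u y (P o\<^sub>L Q o\<^sub>L P) = lossL \<phi> n u y Q"
  unfolding lossL_def
proof (rule sum.cong[OF refl])
  fix i assume i: "i \<in> {1..n}"
  let ?A = "blinfun_apply (\<phi> (u i))"
  have lin: "linear ?A"
    by (simp add: blinfun.bounded_linear_right bounded_linear.linear)
  have range_A: "range ?A \<subseteq> S"
    using ranges i by blast
  have "P (?A (u i)) = ?A (u i)"
    using range_A by (intro orth_proj_fixes[OF assms(1,2)]) auto
  then have "adjoint ?A ((P o\<^sub>L Q o\<^sub>L P) (?A (u i))) = adjoint ?A (Q (?A (u i)))"
    using adjoint_orth_proj[OF lin range_A assms(1,2)] by simp
  then show "(norm (adjoint ?A ((P o\<^sub>L Q o\<^sub>L P) (?A (u i))) - y i))\<^sup>2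
           = (norm (adjoint ?A (Q (?A (u i))) - y i))\<^sup>2"
    by simp
qed

theorem lemma1:
  fixes \<phi> :: "'u::euclidean_space \<Rightarrow> ('u \<Rightarrow>\<^sub>L 'w::{real_inner,complete_space})"
    and n :: nat and u y :: "nat \<Rightarrow> 'u"
    and P :: "'w \<Rightarrow>\<^sub>L 'w"
  assumes "is_orth_proj P (span (\<Union>i\<in>{1..n}. range (blinfun_apply (\<phi> (u i)))))"
  shows "(\<forall>Q. lossL \<phi> n u y (P o\<^sub>L Q o\<^sub>L P) = lossL \<phi> n u y Q)
     \<and> (\<forall>Q. norm (P o\<^sub>L Q o\<^sub>L P) \<le> norm Q)
     \<and> (\<forall>Q. nonneg_op Q \<longrightarrow> nonneg_op (P o\<^sub>L Q o\<^sub>L P))"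
proof -
  have "lossL \<phi> n u y (P o\<^sub>L Q o\<^sub>L P) = lossL \<phi> n u y Q" for Q
    by (rule lossL_compress[OF subspace_span assms span_superset])
  then show ?thesis
    using norm_compress_le[OF norm_orth_proj_le_one[OF assms]]
      nonneg_op_compress[OF orth_proj_self_adjoint[OF assms]]
    by blast
qed

end
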